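(* Let $n\geq 1$ be an integer, let $\mu\in\mathbb{C}$ with $\mu\neq 0$ and $\operatorname{Re}(\mu)<n$, and let $\lambda\in\mathbb{C}$ with $0<|\lambda|\leq 1$. Suppose $p\in\mathcal{H}[1,n]$ satisfies $$p(z)-\frac{1}{\mu}\,z p'(z)\prec 1+\lambda z \qquad (z\in\mathbb{U}).$$ Then $p(z)\prec 1+\lambda_1 z$ $(z\in\mathbb{U})$ for every complex number $\lambda_1$ with $$|\lambda_1|=|\lambda|\,\frac{|\mu|}{|n-\mu|};$$ equivalently, $|p(z)-1|<|\lambda|\,|\mu|/|n-\mu|$ for all $z\in\mathbb{U}$.
   Context: $\mathbb{U}=\{z\in\mathbb{C}:|z|<1\}$. For $a_0\in\mathbb{C}$ and an integer $n\geq1$, $\mathcal{H}[a_0,n]$ denotes the class of functions analytic in $\mathbb{U}$ of the form $p(z)=a_0+\sum_{k=n}^\infty a_k z^k$. For $f,g$ analytic in $\mathbb{U}$, $f\prec g$ ($f$ is subordinate to $g$) means there is an analytic $w$ in $\mathbb{U}$ with $w(0)=0$, $|w(z)|<1$ on $\mathbb{U}$, and $f(z)=g(w(z))$; when $g$ is univalent this is equivalent to $f(0)=g(0)$ and $f(\mathbb{U})\subset g(\mathbb{U})$. In particular, for $\lambda\neq 0$, $q\prec 1+\lambda z$ means $q(0)=1$ and $|q(z)-1|<|\lambda|$ on $\mathbb{U}$. *)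

theory Defs
  imports "HOL-Analysis.Analysis"
begin

definition Hclass :: "complex \<Rightarrow> nat \<Rightarrow> (complex \<Rightarrow> complex) set" where
  "Hclass a0 n = {p. p holomorphic_on ball 0 1 \<and>
     (\<exists>a::nat \<Rightarrow> complex. (\<forall>k<n. a k = 0) \<and>
        (\<forall>z\<in>ball 0 1. (\<lambda>k. a k * z ^ k) sums (p z - a0)))}"

definition subordinate :: "(complex \<Rightarrow> complex) \<Rightarrow> (complex \<Rightarrow> complex) \<Rightarrow> bool" where
  "subordinate f g \<longleftrightarrow> (\<exists>w. w holomorphic_on ball 0 1 \<and> w 0 = 0 \<and>
     (\<forall>z\<in>ball 0 1. norm (w z) < 1 \<and> f z = g (w z)))"

end

theory Submission
  imports Defs "HOL-Complex_Analysis.Complex_Analysis"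
begin

text \<open>Write \<open>p = 1 + g\<close> with \<open>g z = z ^ n * G z\<close>. If \<open>|g|\<close> reached
  \<open>R = |\<lambda>| |\<mu>| / |n - \<mu>|\<close> in the disc, take a point \<open>z\<^sub>0\<close> of least modulus where it does.
  Jack's lemma gives \<open>z\<^sub>0 g'(z\<^sub>0) = \<kappa> g(z\<^sub>0)\<close> with real \<open>\<kappa> \<ge> n\<close>: radially
  \<open>|g(t z\<^sub>0)| \<le> t\<^sup>n R\<close> by the maximum principle for \<open>G\<close>, and tangentially \<open>|g|\<close> is
  maximal at \<open>z\<^sub>0\<close>. Then \<open>|g - z g'/\<mu>| = R |\<mu> - \<kappa>| / |\<mu>| \<ge> R |\<mu> - n| / |\<mu>| = |\<lambda>|\<close>
  at \<open>z\<^sub>0\<close> because \<open>Re \<mu> < n\<close>, contradicting the hypothesis. So \<open>(p - 1) / \<lambda>\<^sub>1\<close> is a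
  Schwarz function.\<close>

lemma Hclass_factor:
  assumes "p \<in> Hclass a0 n"
  obtains G where "G holomorphic_on ball 0 1" "\<And>z. z \<in> ball 0 1 \<Longrightarrow> p z = a0 + z ^ n * G z"
proof -
  from assms obtain a where a: "\<forall>k<n. a k = 0"
    and sums_p: "\<And>z. z \<in> ball 0 1 \<Longrightarrow> (\<lambda>k. a k * z ^ k) sums (p z - a0)"
    unfolding Hclass_def by blast
  have shifted: "(\<lambda>k. z ^ n * (a (k + n) * z ^ k)) sums (p z - a0)" if "z \<in> ball 0 1" for z
    using sums_split_initial_segment[OF sums_p[OF that], of n] a
    by (simp add: power_add mult_ac)
  define G where "G z = (\<Sum>k. a (k + n) * z ^ k)" for z
  have sums_G: "(\<lambda>k. a (k + n) * z ^ k) sums G z" if "z \<in> ball 0 1" for z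
  proof (cases "z = 0")
    case True
    then show ?thesis using powser_sums_zero[of "\<lambda>k. a (k + n)"] by (simp add: G_def sums_iff)
  next
    case False
    then show ?thesis
      using sums_mult_D[OF shifted[OF that]] by (simp add: G_def sums_iff)
  qed
  show thesis
  proof
    show "G holomorphic_on ball 0 1"
      by (rule power_series_holomorphic[where a="\<lambda>k. a (k + n)"]) (use sums_G in simp)
    show "p z = a0 + z ^ n * G z" if "z \<in> ball 0 1" for z
      using sums_unique2[OF shifted[OF that] sums_mult[OF sums_G[OF that]]] by (simp add: algebra_simps)
  qed
qed

lemma Re_cnj_mult_self: "Re (cnj z * z) = (norm z)\<^sup>2"
  by (simp add: cmod_power2 flip: power2_eq_square)

lemma eq_of_real_mult_if_Im_cnj_mult_eq_0:
  assumes "Im (cnj x * y) = 0" "x \<noteq> 0"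
  shows "y = of_real (Re (cnj x * y) / (norm x)\<^sup>2) * x"
proof -
  define c where "c = cnj x * y"
  have "x * c = of_real ((norm x)\<^sup>2) * y"
    unfolding c_def complex_norm_square by (simp add: mult_ac)
  then have "y = x * c / of_real ((norm x)\<^sup>2)"
    using assms(2) by (simp add: eq_divide_eq mult.commute)
  also have "\<dots> = of_real (Re c / (norm x)\<^sup>2) * x"
    using assms(1) by (subst complex_eq_iff[of c "of_real (Re c)", THEN iffD2]) (simp_all add: c_def)
  finally show ?thesis
    by (simp add: c_def)
qed

lemma has_real_derivative_Re_along:
  assumes "(g has_field_derivative g') (at (\<gamma> (of_real t)))"
    and "(\<gamma> has_field_derivative \<gamma>') (at (of_real t))"
  shows "((\<lambda>s. Re (A * g (\<gamma> (of_real s)))) has_real_derivative Re (A * (g' * \<gamma>'))) (at t)"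
  using has_field_derivative_Re[OF has_vector_derivative_real_field[OF
        DERIV_cmult[OF DERIV_chain2[OF assms]], where s=UNIV]] by simp

lemma norm_power_mult_le_on_cball:
  assumes G: "G holomorphic_on cball 0 r" and r: "0 < r"
    and circle: "\<And>\<zeta>. norm \<zeta> = r \<Longrightarrow> norm (\<zeta> ^ n * G \<zeta>) \<le> M"
    and z: "norm z \<le> r"
  shows "norm (z ^ n * G z) \<le> (norm z / r) ^ n * M"
proof -
  have G_circle: "norm (G \<zeta>) \<le> M / r ^ n" if "norm \<zeta> = r" for \<zeta>
    using circle[OF that] that r by (simp add: norm_mult norm_power pos_le_divide_eq mult.commute)
  have "norm (G z) \<le> M / r ^ n"
  proof (cases "norm z = r")
    case False
    with z have "z \<in> ball 0 r" by simp
    show ?thesis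
      by (rule maximum_modulus_frontier[of G "ball 0 r"])
         (use G r G_circle \<open>z \<in> ball 0 r\<close> in
           \<open>auto intro: holomorphic_on_subset holomorphic_on_imp_continuous_on\<close>)
  qed (rule G_circle)
  then have "norm z ^ n * norm (G z) \<le> norm z ^ n * (M / r ^ n)"
    by (intro mult_left_mono) simp_all
  then show ?thesis
    by (simp add: norm_mult norm_power power_divide)
qed

lemma radial_derivative_at_max:
  assumes g': "(g has_field_derivative g') (at z0)"
    and radial: "\<And>t. 0 < t \<Longrightarrow> t < 1 \<Longrightarrow> norm (g (of_real t * z0)) \<le> t ^ n * norm (g z0)"
  shows "real n * (norm (g z0))\<^sup>2 \<le> Re (cnj (g z0) * (z0 * g'))"
proof (rule ccontr)
  assume less: "\<not> ?thesis"
  \<comment> \<open>\<open>F \<le> 0\<close> on \<open>]0, 1[\<close> and \<open>F 1 = 0\<close>, so \<open>F\<close> cannot be decreasing at 1.\<close>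
  define R where "R = norm (g z0)"
  define F where "F t = Re (cnj (g z0) * g (of_real t * z0)) - R\<^sup>2 * t ^ n" for t :: real
  have "((\<lambda>s. s * z0) has_field_derivative z0) (at (of_real 1))"
    by (auto intro!: derivative_eq_intros)
  moreover have "(g has_field_derivative g') (at ((\<lambda>s. s * z0) (of_real 1)))"
    using g' by simp
  ultimately have "((\<lambda>t. Re (cnj (g z0) * g (of_real t * z0))) has_real_derivative
      Re (cnj (g z0) * (g' * z0))) (at 1)"
    using has_real_derivative_Re_along[where \<gamma>="\<lambda>s. s * z0"] by blast
  moreover have "((\<lambda>t. R\<^sup>2 * t ^ n) has_real_derivative R\<^sup>2 * real n) (at 1)"
    by (auto intro!: derivative_eq_intros)
  ultimately have "(F has_real_derivative Re (cnj (g z0) * (g' * z0)) - R\<^sup>2 * real n) (at 1)"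
    unfolding F_def by (rule DERIV_diff)
  moreover have "Re (cnj (g z0) * (g' * z0)) - R\<^sup>2 * real n < 0"
    using less by (simp add: R_def mult.commute)
  ultimately obtain d where "d > 0" and dec: "\<And>h. 0 < h \<Longrightarrow> h < d \<Longrightarrow> F 1 < F (1 - h)"
    using DERIV_neg_dec_left by blast
  define h where "h = min (d / 2) (1 / 2)"
  have h: "0 < h" "h < d" "h < 1"
    using \<open>d > 0\<close> by (auto simp: h_def)
  have "Re (cnj (g z0) * g (of_real (1 - h) * z0)) \<le> norm (cnj (g z0) * g (of_real (1 - h) * z0))"
    by (rule complex_Re_le_cmod)
  also have "\<dots> = R * norm (g (of_real (1 - h) * z0))"
    by (simp add: R_def norm_mult)
  also have "\<dots> \<le> R * ((1 - h) ^ n * R)"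
    using radial[of "1 - h"] h by (intro mult_left_mono) (auto simp: R_def)
  finally have "F (1 - h) \<le> F 1"
    by (simp add: F_def R_def complex_norm_square[symmetric] power2_eq_square mult_ac)
  with dec[OF h(1,2)] show False by simp
qed

lemma tangential_derivative_at_max:
  assumes g': "(g has_field_derivative g') (at z0)"
    and circle: "\<And>\<theta>. norm (g (exp (\<i> * of_real \<theta>) * z0)) \<le> norm (g z0)"
  shows "Im (cnj (g z0) * (z0 * g')) = 0"
proof -
  define T where "T \<theta> = Re (cnj (g z0) * g (exp (\<i> * of_real \<theta>) * z0))" for \<theta> :: real
  have "((\<lambda>s. exp (\<i> * s) * z0) has_field_derivative \<i> * z0) (at (of_real 0))"
    by (auto intro!: derivative_eq_intros)
  moreover have "(g has_field_derivative g') (at ((\<lambda>s. exp (\<i> * s) * z0) (of_real 0)))"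
    using g' by simp
  ultimately have "(T has_real_derivative Re (cnj (g z0) * (g' * (\<i> * z0)))) (at 0)"
    unfolding T_def using has_real_derivative_Re_along[where \<gamma>="\<lambda>s. exp (\<i> * s) * z0"] by blast
  moreover have "T \<theta> \<le> T 0" for \<theta>
  proof -
    have "T \<theta> \<le> norm (cnj (g z0) * g (exp (\<i> * of_real \<theta>) * z0))"
      unfolding T_def by (rule complex_Re_le_cmod)
    also have "\<dots> \<le> norm (g z0) * norm (g z0)"
      using circle by (simp add: norm_mult mult_left_mono)
    also have "\<dots> = T 0"
      using Re_cnj_mult_self[of "g z0"] by (simp add: T_def power2_eq_square)
    finally show ?thesis .
  qed
  ultimately have "Re (cnj (g z0) * (g' * (\<i> * z0))) = 0"
    using DERIV_local_max[OF _ zero_less_one] by blast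
  then show ?thesis
    by (simp add: mult_ac)
qed

lemma Jack_lemma:
  assumes G: "G holomorphic_on ball 0 1" and g: "\<And>z. z \<in> ball 0 1 \<Longrightarrow> g z = z ^ n * G z"
    and z0: "z0 \<in> ball 0 1" "g z0 \<noteq> 0"
    and max: "\<And>z. norm z \<le> norm z0 \<Longrightarrow> norm (g z) \<le> norm (g z0)"
  obtains \<kappa> where "real n \<le> \<kappa>" "z0 * deriv g z0 = of_real \<kappa> * g z0"
proof (cases "z0 = 0")
  case True
  with g z0 have "n = 0" by (cases n) auto
  with True show thesis by (intro that[of 0]) auto
next
  case False
  define X where "X = g z0"
  define E where "E = cnj X * (z0 * deriv g z0)"
  have "(\<lambda>z. z ^ n * G z) holomorphic_on ball 0 1"
    using G by (intro holomorphic_intros)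
  then have "g holomorphic_on ball 0 1"
    by (rule holomorphic_transform) (use g in auto)
  then have g': "(g has_field_derivative deriv g z0) (at z0)"
    using z0 by (intro holomorphic_derivI) auto
  have G_cball: "G holomorphic_on cball 0 (norm z0)"
    by (rule holomorphic_on_subset[OF G]) (use z0 in auto)
  have circle: "norm (\<zeta> ^ n * G \<zeta>) \<le> norm (g z0)" if "norm \<zeta> = norm z0" for \<zeta>
    using max[of \<zeta>] g[of \<zeta>] that z0 by simp
  have "real n * (norm X)\<^sup>2 \<le> Re E"
    unfolding X_def E_def
  proof (rule radial_derivative_at_max[OF g'])
    fix t :: real assume t: "0 < t" "t < 1"
    have le: "norm (of_real t * z0) \<le> norm z0"
      using t by (simp add: norm_mult mult_left_le_one_le)
    have "of_real t * z0 \<in> ball 0 1"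
      using le z0 by simp
    then have "norm (g (of_real t * z0)) \<le> (norm (of_real t * z0) / norm z0) ^ n * norm (g z0)"
      using norm_power_mult_le_on_cball[OF G_cball _ circle le] False by (simp add: g)
    then show "norm (g (of_real t * z0)) \<le> t ^ n * norm (g z0)"
      using t False by (simp add: norm_mult)
  qed
  moreover have "Im E = 0"
    unfolding X_def E_def
    by (rule tangential_derivative_at_max[OF g'], rule max) (simp add: norm_mult)
  moreover from this have "z0 * deriv g z0 = of_real (Re E / (norm X)\<^sup>2) * X"
    unfolding E_def by (rule eq_of_real_mult_if_Im_cnj_mult_eq_0) (use z0 in \<open>simp add: X_def\<close>)
  ultimately show thesis
    using z0 by (intro that[of "Re E / (norm X)\<^sup>2"]) (simp_all add: X_def pos_le_divide_eq)
qed

lemma exists_minimal_norm_point_ge: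
  fixes g :: "complex \<Rightarrow> complex"
  assumes g: "continuous_on (ball 0 1) g" and g0: "norm (g 0) < R"
    and z1: "z1 \<in> ball 0 1" "R \<le> norm (g z1)"
  obtains z0 where "z0 \<in> ball 0 1" "norm (g z0) = R"
    "\<And>z. norm z \<le> norm z0 \<Longrightarrow> norm (g z) \<le> R"
proof -
  define D :: "complex set" where "D = cball 0 (norm z1)"
  have D: "D \<subseteq> ball 0 1" "closed D" "bounded D" "continuous_on D (\<lambda>z. norm (g z))"
    using z1 g by (auto simp: D_def intro!: continuous_intros intro: continuous_on_subset)
  define K where "K = D \<inter> (\<lambda>z. norm (g z)) -` {R..}"
  have "compact K"
    unfolding K_def compact_eq_bounded_closed
    using D by (auto intro: continuous_closed_preimage bounded_subset)
  moreover have "z1 \<in> K"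
    using z1 by (simp add: K_def D_def)
  ultimately obtain z0 where "z0 \<in> K" and least: "\<And>z. z \<in> K \<Longrightarrow> norm z0 \<le> norm z"
    using continuous_attains_inf[of K norm] continuous_on_norm_id by blast
  then have z0: "z0 \<in> D" "R \<le> norm (g z0)"
    by (auto simp: K_def)
  with g0 have "0 < norm z0" by auto
  define L where "L = D \<inter> (\<lambda>z. norm (g z)) -` {..R}"
  have "ball 0 (norm z0) \<subseteq> L"
  proof
    fix z :: complex assume z: "z \<in> ball 0 (norm z0)"
    with z0 have "z \<in> D" by (auto simp: D_def)
    with least[of z] z show "z \<in> L"
      by (force simp: K_def L_def)
  qed
  moreover have "closed L"
    unfolding L_def using D by (intro continuous_closed_preimage) auto
  ultimately have "cball 0 (norm z0) \<subseteq> L"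
    using closure_minimal closure_ball[OF \<open>0 < norm z0\<close>] by metis
  then have le: "norm (g z) \<le> R" if "norm z \<le> norm z0" for z
    using that by (auto simp: L_def)
  show thesis
  proof
    show "z0 \<in> ball 0 1" using z0 D by auto
    show "norm (g z0) = R" using le[of z0] z0 by simp
  qed (rule le)
qed

lemma norm_diff_of_real_mono:
  fixes mu :: complex
  assumes "Re mu \<le> a" "a \<le> b"
  shows "norm (mu - of_real a) \<le> norm (mu - of_real b)"
proof -
  have "(a - Re mu)\<^sup>2 + (Im mu)\<^sup>2 \<le> (b - Re mu)\<^sup>2 + (Im mu)\<^sup>2"
    using assms by (simp add: power_mono)
  then show ?thesis
    by (simp add: cmod_def power2_commute[of "Re mu"])
qed

lemma norm_lt_if_differential_bound:
  fixes g G :: "complex \<Rightarrow> complex" and mu :: complex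
  assumes G: "G holomorphic_on ball 0 1" and gG: "\<And>z. z \<in> ball 0 1 \<Longrightarrow> g z = z ^ n * G z"
    and n: "n \<ge> 1" and mu: "mu \<noteq> 0" "Re mu < real n"
    and bound: "\<And>z. z \<in> ball 0 1 \<Longrightarrow> norm (g z - (1 / mu) * z * deriv g z) < L"
    and z: "z \<in> ball 0 1"
  shows "norm (g z) < L * norm mu / norm (of_nat n - mu)"
proof -
  define R where "R = L * norm mu / norm (of_nat n - mu)"
  have "of_nat n \<noteq> mu"
    using mu(2) by auto
  moreover have "0 < L"
    using bound[of 0] by (auto intro: le_less_trans[OF norm_ge_zero])
  ultimately have R: "0 < R" "R * norm (mu - of_nat n) / norm mu = L"
    using mu(1) by (auto simp: R_def norm_minus_commute)
  have "continuous_on (ball 0 1) (\<lambda>z. z ^ n * G z)"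
    using G by (intro continuous_intros holomorphic_on_imp_continuous_on)
  then have g_cont: "continuous_on (ball 0 1) g"
    by (rule continuous_on_eq) (use gG in auto)
  have g0: "g 0 = 0"
    using gG[of 0] n by simp
  have "\<not> R \<le> norm (g z)"
  proof
    assume large: "R \<le> norm (g z)"
    obtain z0 where z0: "z0 \<in> ball 0 1" "norm (g z0) = R"
      and max: "\<And>z. norm z \<le> norm z0 \<Longrightarrow> norm (g z) \<le> R"
      by (rule exists_minimal_norm_point_ge[OF g_cont _ z large]) (use g0 R in auto)
    obtain \<kappa> where \<kappa>: "real n \<le> \<kappa>" "z0 * deriv g z0 = of_real \<kappa> * g z0"
      by (rule Jack_lemma[OF G gG z0(1)]) (use z0 R max in auto)
    have "g z0 - (1 / mu) * z0 * deriv g z0 = g z0 * (mu - of_real \<kappa>) / mu"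
      using \<kappa>(2) mu(1) by (simp add: field_simps)
    then have "norm (g z0 - (1 / mu) * z0 * deriv g z0) = R * norm (mu - of_real \<kappa>) / norm mu"
      using z0(2) by (simp add: norm_mult norm_divide)
    also have "\<dots> \<ge> R * norm (mu - of_nat n) / norm mu"
      using norm_diff_of_real_mono[of mu "real n" \<kappa>] mu(2) \<kappa>(1) R(1)
      by (intro divide_right_mono mult_left_mono) auto
    finally show False
      using bound[OF z0(1)] R(2) by simp
  qed
  then show ?thesis
    by (simp add: R_def)
qed

theorem lemma2:
  fixes n :: nat and mu lam lam1 :: complex and p :: "complex \<Rightarrow> complex"
  assumes "n \<ge> 1"
    and "mu \<noteq> 0" and "Re mu < real n"
    and "0 < norm lam" and "norm lam \<le> 1"
    and "p \<in> Hclass 1 n"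
    and "subordinate (\<lambda>z. p z - (1 / mu) * z * deriv p z) (\<lambda>z. 1 + lam * z)"
    and "norm lam1 = norm lam * norm mu / norm (of_nat n - mu)"
  shows "subordinate p (\<lambda>z. 1 + lam1 * z)"
proof -
  obtain G where G: "G holomorphic_on ball 0 1"
    and pG: "\<And>z. z \<in> ball 0 1 \<Longrightarrow> p z = 1 + z ^ n * G z"
    using Hclass_factor[OF assms(6)] by blast
  have p: "p holomorphic_on ball 0 1"
    using assms(6) by (simp add: Hclass_def)
  obtain w where w: "\<And>z. z \<in> ball 0 1 \<Longrightarrow>
      norm (w z) < 1 \<and> p z - (1 / mu) * z * deriv p z = 1 + lam * w z"
    using assms(7) unfolding subordinate_def by blast
  have "deriv (\<lambda>z. p z - 1) z = deriv p z" if "z \<in> ball 0 1" for z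
    using p that by (subst deriv_diff) (auto intro: holomorphic_on_imp_differentiable_at)
  then have "norm ((p z - 1) - (1 / mu) * z * deriv (\<lambda>z. p z - 1) z) < norm lam"
    if "z \<in> ball 0 1" for z
    using w[OF that] that assms(4) by (simp add: norm_mult algebra_simps)
  then have "norm (p z - 1) < norm lam1" if "z \<in> ball 0 1" for z
    using norm_lt_if_differential_bound[of G "\<lambda>z. p z - 1", OF G _ assms(1-3) _ that] pG assms(8)
    by simp
  moreover have "lam1 \<noteq> 0"
    using assms(2-4,8) by auto
  ultimately show ?thesis
    unfolding subordinate_def using p pG[of 0] assms(1)
    by (intro exI[of _ "\<lambda>z. (p z - 1) / lam1"]) (auto simp: norm_divide intro!: holomorphic_intros)
qed

end
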